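(* Let $T$ be a ring which is integral over its center $C=C(T)$. Suppose $A$ is a conch maximal subring of $C$, and suppose the integral closure $B$ of $A$ in $T$ (the set of elements of $T$ that are roots of monic polynomials with coefficients in $A$) is a subring of $T$. Then $T$ has a maximal subring $R$ with $B\subseteq R$ and $R\cap C=A$.
   Context: All rings are associative with identity $1\neq0$; subrings contain the identity. A maximal subring of a ring $S$ is a proper subring with no subring strictly between it and $S$. $T$ is integral over its center if every element of $T$ is a root of a monic polynomial with coefficients in $C(T)$. A conch maximal subring of the commutative ring $C$ is a maximal subring $A$ of $C$ for which there exists a unit $u$ of $C$ with $u\in A$ and $u^{-1}\notin A$. *)

theory Defs
  imports Main
begin

definition is_subring :: "'a::ring_1 set \<Rightarrow> bool" where
  "is_subring S \<longleftrightarrow> 1 \<in> S \<and> (\<forall>x\<in>S. \<forall>y\<in>S. x + y \<in> S \<and> x * y \<in> S) \<and> (\<forall>x\<in>S. - x \<in> S)"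

definition center :: "'a::ring_1 set" where
  "center = {c. \<forall>x. c * x = x * c}"

definition maximal_subring :: "'a::ring_1 set \<Rightarrow> 'a set \<Rightarrow> bool" where
  "maximal_subring S R \<longleftrightarrow> is_subring R \<and> R \<subseteq> S \<and> R \<noteq> S \<and>
     (\<forall>Q. is_subring Q \<and> R \<subseteq> Q \<and> Q \<subseteq> S \<longrightarrow> Q = R \<or> Q = S)"

definition integral_over :: "'a::ring_1 set \<Rightarrow> 'a \<Rightarrow> bool" where
  "integral_over S x \<longleftrightarrow> (\<exists>n c. (\<forall>i<n. c i \<in> S) \<and> x ^ n + (\<Sum>i<n. c i * x ^ i) = 0)"

definition integral_closure :: "'a::ring_1 set \<Rightarrow> 'a set" where
  "integral_closure S = {x. integral_over S x}"

definition conch_maximal_subring_of_center :: "'a::ring_1 set \<Rightarrow> bool" where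
  "conch_maximal_subring_of_center A \<longleftrightarrow> maximal_subring center A \<and>
     (\<exists>u v. u \<in> A \<and> v \<in> center \<and> u * v = 1 \<and> v * u = 1 \<and> v \<notin> A)"

end

theory Submission
  imports Defs
begin

text \<open>Let \<open>u \<in> A\<close> be the unit with \<open>v = u\<inverse> \<notin> A\<close>. The central elements \<open>c\<close> with \<open>c u\<^sup>k \<in> A\<close>
  for all large \<open>k\<close> form a subring of \<open>C\<close> containing \<open>A\<close> and \<open>v\<close>, so by maximality of \<open>A\<close> it is
  all of \<open>C\<close>. Hence for every \<open>x \<in> T\<close>, integral over \<open>C\<close>, some \<open>u\<^sup>M x\<close> is integral over \<open>A\<close>, i.e.
  \<open>T = \<Union>\<^sub>M v\<^sup>M B\<close>. On the other hand \<open>v\<close> is not integral over \<open>A\<close> (multiply an integral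
  equation of \<open>v\<close> by a power of \<open>u\<close>). A subring \<open>R \<supseteq> B\<close> maximal with respect to \<open>v \<notin> R\<close> (Zorn)
  is then a maximal subring of \<open>T\<close>, and \<open>R \<inter> C = A\<close> again by maximality of \<open>A\<close>.\<close>

lemma is_subring_one: "is_subring S \<Longrightarrow> 1 \<in> S"
  and is_subring_add: "is_subring S \<Longrightarrow> x \<in> S \<Longrightarrow> y \<in> S \<Longrightarrow> x + y \<in> S"
  and is_subring_mult: "is_subring S \<Longrightarrow> x \<in> S \<Longrightarrow> y \<in> S \<Longrightarrow> x * y \<in> S"
  and is_subring_uminus: "is_subring S \<Longrightarrow> x \<in> S \<Longrightarrow> - x \<in> S"
  unfolding is_subring_def by blast+

lemma is_subring_zero: "is_subring S \<Longrightarrow> 0 \<in> S"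
  by (metis is_subring_add is_subring_one is_subring_uminus add.right_inverse)

lemma is_subring_power: "is_subring S \<Longrightarrow> x \<in> S \<Longrightarrow> x ^ n \<in> S"
  by (induction n) (auto intro: is_subring_one is_subring_mult)

lemma is_subring_sum: "is_subring S \<Longrightarrow> (\<And>i. i \<in> I \<Longrightarrow> f i \<in> S) \<Longrightarrow> sum f I \<in> S"
  by (induction I rule: infinite_finite_induct) (auto intro: is_subring_zero is_subring_add)

lemma is_subring_Int: "is_subring S \<Longrightarrow> is_subring T \<Longrightarrow> is_subring (S \<inter> T)"
  unfolding is_subring_def by blast

lemma is_subring_Union_chain:
  assumes "C \<noteq> {}" and "\<forall>X\<in>C. is_subring X" and "\<forall>X\<in>C. \<forall>Y\<in>C. X \<subseteq> Y \<or> Y \<subseteq> X"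
  shows "is_subring (\<Union>C)"
  unfolding is_subring_def
proof (intro conjI ballI)
  show "1 \<in> \<Union>C"
    using assms(1,2) is_subring_one by blast
next
  fix x y assume "x \<in> \<Union>C" "y \<in> \<Union>C"
  then obtain Z where "Z \<in> C" "x \<in> Z" "y \<in> Z"
    using assms(3) by blast
  then show "x + y \<in> \<Union>C" "x * y \<in> \<Union>C"
    using assms(2) is_subring_add is_subring_mult by blast+
next
  fix x assume "x \<in> \<Union>C"
  then show "- x \<in> \<Union>C"
    using assms(2) is_subring_uminus by blast
qed

lemma maximal_subringD:
  assumes "maximal_subring S R"
  shows "is_subring R" "R \<subseteq> S"
    and "is_subring Q \<Longrightarrow> R \<subseteq> Q \<Longrightarrow> Q \<subseteq> S \<Longrightarrow> Q = R \<or> Q = S"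
  using assms unfolding maximal_subring_def by blast+

lemma center_commute: "c \<in> center \<Longrightarrow> c * x = x * c"
  unfolding center_def by blast

lemma is_subring_center: "is_subring center"
  unfolding is_subring_def
proof (intro conjI ballI)
  fix c d :: 'a assume c: "c \<in> center" and d: "d \<in> center"
  have "c * d * x = x * (c * d)" for x
    by (metis c d center_commute mult.assoc)
  then show "c * d \<in> center"
    unfolding center_def by blast
  show "c + d \<in> center"
    using c d unfolding center_def by (simp add: distrib_left distrib_right)
qed (auto simp: center_def)

lemma power_mult_center: "c \<in> center \<Longrightarrow> (c * x) ^ n = c ^ n * x ^ n"
proof (induction n)
  case (Suc n)
  have "c ^ n \<in> center"
    using Suc.prems is_subring_power is_subring_center by blast
  then have "(c * x) ^ Suc n = c * (c ^ n * x) * x ^ n"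
    using Suc by (simp add: center_commute mult.assoc)
  then show ?case
    by (simp add: mult.assoc)
qed simp

lemma subset_integral_closure: "is_subring S \<Longrightarrow> S \<subseteq> integral_closure S"
  unfolding integral_closure_def integral_over_def
  by (auto intro!: exI[of _ 1] exI[of _ "\<lambda>_. - _"] is_subring_uminus)

text \<open>Multiplying a monic equation of degree \<open>k + 1\<close> for \<open>v\<close> by \<open>u\<^sup>k\<close> writes \<open>v\<close> as a
  polynomial in \<open>u\<close>.\<close>

lemma integral_inverse_mem:
  assumes S: "is_subring S" "S \<subseteq> center" and u: "u \<in> S" and uv: "u * v = 1"
    and "integral_over S v"
  shows "v \<in> S"
proof -
  obtain n c where c: "\<forall>i<n. c i \<in> S" and eq: "v ^ n + (\<Sum>i<n. c i * v ^ i) = 0"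
    using assms(5) unfolding integral_over_def by blast
  show ?thesis
  proof (cases n)
    case 0
    then have "v = 0"
      using eq by (metis add.right_neutral lessThan_0 mult_1_right mult_zero_right power_0 sum.empty)
    then show ?thesis
      using S is_subring_zero by simp
  next
    case (Suc k)
    have uk: "u ^ k \<in> center"
      using S u is_subring_power is_subring_center by blast
    have "u ^ k * v ^ i = u ^ (k - i)" if "i \<le> k" for i
    proof -
      have "u ^ k = u ^ (k - i) * u ^ i"
        using that by (simp flip: power_add)
      then show ?thesis
        by (simp add: mult.assoc left_right_inverse_power[OF uv])
    qed
    then have "u ^ k * (c i * v ^ i) = c i * u ^ (k - i)" if "i < n" for i
      using that Suc center_commute[OF uk] by (metis less_Suc_eq_le mult.assoc)
    moreover have "u ^ k * v ^ n = v"
      using Suc by (simp add: power_Suc2 mult.assoc[symmetric] left_right_inverse_power[OF uv]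
          del: power_Suc)
    ultimately have "v + (\<Sum>i<n. c i * u ^ (k - i)) = u ^ k * 0"
      by (simp add: distrib_left sum_distrib_left flip: eq)
    then have "v = - (\<Sum>i<n. c i * u ^ (k - i))"
      by (simp add: eq_neg_iff_add_eq_0)
    moreover have "(\<Sum>i<n. c i * u ^ (k - i)) \<in> S"
      using c S u by (auto intro!: is_subring_sum is_subring_mult is_subring_power)
    ultimately show ?thesis
      using S is_subring_uminus by simp
  qed
qed

definition absorbed_by_powers :: "'a::ring_1 set \<Rightarrow> 'a \<Rightarrow> 'a set" where
  "absorbed_by_powers A u = {c \<in> center. \<forall>\<^sub>F k in sequentially. c * u ^ k \<in> A}"

lemma is_subring_absorbed_by_powers:
  assumes A: "is_subring A" and u: "u \<in> A"
  shows "is_subring (absorbed_by_powers A u)"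
  unfolding is_subring_def
proof (intro conjI ballI)
  show "1 \<in> absorbed_by_powers A u"
    using A u is_subring_one[OF is_subring_center] is_subring_power[OF A u]
    unfolding absorbed_by_powers_def by simp
next
  fix x y assume "x \<in> absorbed_by_powers A u" "y \<in> absorbed_by_powers A u"
  then have x: "x \<in> center" "\<forall>\<^sub>F k in sequentially. x * u ^ k \<in> A"
    and y: "y \<in> center" "\<forall>\<^sub>F k in sequentially. y * u ^ k \<in> A"
    unfolding absorbed_by_powers_def by blast+
  have "\<forall>\<^sub>F k in sequentially. (x + y) * u ^ k \<in> A"
    using x(2) y(2) by eventually_elim (simp add: A distrib_right is_subring_add)
  then show "x + y \<in> absorbed_by_powers A u"
    using x(1) y(1) is_subring_center is_subring_add unfolding absorbed_by_powers_def by blast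
  obtain m1 m2 where m1: "\<forall>k\<ge>m1. x * u ^ k \<in> A" and m2: "\<forall>k\<ge>m2. y * u ^ k \<in> A"
    using x(2) y(2) unfolding eventually_sequentially by blast
  have "x * y * u ^ k \<in> A" if "m1 + m2 \<le> k" for k
  proof -
    have "u ^ k = u ^ m1 * u ^ (k - m1)"
      using that by (simp flip: power_add)
    then have "x * y * u ^ k = (x * u ^ m1) * (y * u ^ (k - m1))"
      using center_commute[OF y(1), of "u ^ m1"] by (metis mult.assoc)
    then show ?thesis
      using that m1 m2 is_subring_mult[OF A] by simp
  qed
  then have "\<forall>\<^sub>F k in sequentially. x * y * u ^ k \<in> A"
    by (rule eventually_sequentiallyI)
  then show "x * y \<in> absorbed_by_powers A u"
    using x(1) y(1) is_subring_center is_subring_mult unfolding absorbed_by_powers_def by blast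
next
  fix x assume "x \<in> absorbed_by_powers A u"
  then have x: "x \<in> center" "\<forall>\<^sub>F k in sequentially. x * u ^ k \<in> A"
    unfolding absorbed_by_powers_def by blast+
  have "\<forall>\<^sub>F k in sequentially. - x * u ^ k \<in> A"
    using x(2) by eventually_elim (simp add: A is_subring_uminus)
  then show "- x \<in> absorbed_by_powers A u"
    using x(1) is_subring_center is_subring_uminus unfolding absorbed_by_powers_def by blast
qed

lemma subset_absorbed_by_powers:
  assumes "is_subring A" "A \<subseteq> center" "u \<in> A"
  shows "A \<subseteq> absorbed_by_powers A u"
proof
  fix a assume a: "a \<in> A"
  then have "\<forall>k. a * u ^ k \<in> A"
    using assms is_subring_mult is_subring_power by blast
  then show "a \<in> absorbed_by_powers A u"
    using a assms(2) unfolding absorbed_by_powers_def by auto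
qed

lemma inverse_mem_absorbed_by_powers:
  assumes "is_subring A" "u \<in> A" "v \<in> center" "v * u = 1"
  shows "v \<in> absorbed_by_powers A u"
proof -
  have "v * u ^ k \<in> A" if "1 \<le> k" for k
    using that assms is_subring_power by (cases k) (simp_all add: mult.assoc[symmetric])
  then have "\<forall>\<^sub>F k in sequentially. v * u ^ k \<in> A"
    by (rule eventually_sequentiallyI)
  then show ?thesis
    unfolding absorbed_by_powers_def using assms(3) by blast
qed

lemma absorbed_by_powers_eq_center:
  assumes "maximal_subring center A" "u \<in> A" "v \<in> center" "v * u = 1" "v \<notin> A"
  shows "absorbed_by_powers A u = center"
proof -
  note A = maximal_subringD(1,2)[OF assms(1)]
  have "absorbed_by_powers A u \<subseteq> center"
    unfolding absorbed_by_powers_def by blast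
  then have "absorbed_by_powers A u = A \<or> absorbed_by_powers A u = center"
    using maximal_subringD(3)[OF assms(1) is_subring_absorbed_by_powers[OF A(1) assms(2)]
        subset_absorbed_by_powers[OF A assms(2)]] by blast
  moreover have "v \<in> absorbed_by_powers A u"
    using inverse_mem_absorbed_by_powers[OF A(1) assms(2-4)] .
  ultimately show ?thesis
    using assms(5) by blast
qed

text \<open>Rescaling by a central \<open>w\<close> turns the coefficients \<open>c\<^sub>i\<close> into \<open>c\<^sub>i w\<^sup>n\<^sup>-\<^sup>i\<close>.\<close>

lemma integral_over_mult_center:
  assumes S: "is_subring S" and w: "w \<in> S" "w \<in> center"
    and c: "\<forall>i<n. c i * w \<in> S" and eq: "x ^ n + (\<Sum>i<n. c i * x ^ i) = 0"
  shows "integral_over S (w * x)"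
proof -
  define c' where "c' i = c i * w * w ^ (n - Suc i)" for i
  have wn: "w ^ n \<in> center"
    using is_subring_power[OF is_subring_center w(2)] .
  have scaled_term: "c' i * (w * x) ^ i = w ^ n * (c i * x ^ i)" if "i < n" for i
  proof -
    have "w * w ^ (n - Suc i) * w ^ i = w ^ n"
      using that by (simp flip: power_Suc power_add)
    moreover have "c' i * (w * x) ^ i = c i * (w * w ^ (n - Suc i) * w ^ i) * x ^ i"
      unfolding c'_def power_mult_center[OF w(2)] by (simp only: mult.assoc)
    ultimately show ?thesis
      using center_commute[OF wn, of "c i"] by (metis mult.assoc)
  qed
  have "(w * x) ^ n + (\<Sum>i<n. c' i * (w * x) ^ i) = w ^ n * (x ^ n + (\<Sum>i<n. c i * x ^ i))"
    using scaled_term by (simp add: power_mult_center[OF w(2)] distrib_left sum_distrib_left)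
  moreover have "\<forall>i<n. c' i \<in> S"
    using c by (simp add: c'_def is_subring_mult[OF S] is_subring_power[OF S w(1)])
  ultimately show ?thesis
    unfolding integral_over_def eq by auto
qed

lemma integral_over_power_mult:
  assumes A: "is_subring A" "A \<subseteq> center" and u: "u \<in> A"
    and absorbed: "absorbed_by_powers A u = center" and "integral_over center x"
  shows "\<exists>M. integral_over A (u ^ M * x)"
proof -
  obtain n c where c: "\<forall>i<n. c i \<in> center" and eq: "x ^ n + (\<Sum>i<n. c i * x ^ i) = 0"
    using assms(5) unfolding integral_over_def by blast
  have "\<forall>i\<in>{..<n}. \<forall>\<^sub>F k in sequentially. c i * u ^ k \<in> A"
    using c absorbed unfolding absorbed_by_powers_def by auto
  then have "\<forall>\<^sub>F k in sequentially. \<forall>i\<in>{..<n}. c i * u ^ k \<in> A"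
    by (rule eventually_ball_finite[OF finite_lessThan])
  then obtain M where "\<forall>i<n. c i * u ^ M \<in> A"
    unfolding eventually_sequentially by blast
  moreover have "u ^ M \<in> A" "u ^ M \<in> center"
    using A u is_subring_power by blast+
  ultimately show ?thesis
    using integral_over_mult_center[OF A(1) _ _ _ eq] by blast
qed

lemma maximal_subring_avoiding:
  assumes "is_subring B" "v \<notin> B"
  obtains R where "is_subring R" "B \<subseteq> R" "v \<notin> R"
    "\<And>Q. is_subring Q \<Longrightarrow> R \<subseteq> Q \<Longrightarrow> v \<notin> Q \<Longrightarrow> Q = R"
proof -
  define F where "F = {Q. is_subring Q \<and> B \<subseteq> Q \<and> v \<notin> Q}"
  have chain: "\<Union>C \<in> F" if C: "C \<noteq> {}" "subset.chain F C" for C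
  proof -
    have "C \<subseteq> F" "\<forall>X\<in>C. \<forall>Y\<in>C. X \<subseteq> Y \<or> Y \<subseteq> X"
      using C(2) unfolding subset.chain_def by blast+
    then have "is_subring (\<Union>C)"
      using is_subring_Union_chain[OF C(1)] unfolding F_def by blast
    moreover have "B \<subseteq> \<Union>C" "v \<notin> \<Union>C"
      using C(1) \<open>C \<subseteq> F\<close> unfolding F_def by blast+
    ultimately show ?thesis
      unfolding F_def by blast
  qed
  have "F \<noteq> {}"
    using assms unfolding F_def by blast
  then obtain R where "R \<in> F" "\<forall>Q\<in>F. R \<subseteq> Q \<longrightarrow> Q = R"
    using subset_Zorn_nonempty[OF _ chain] by blast
  then have "is_subring R" "B \<subseteq> R" "v \<notin> R"
    and "\<And>Q. is_subring Q \<Longrightarrow> R \<subseteq> Q \<Longrightarrow> v \<notin> Q \<Longrightarrow> Q = R"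
    unfolding F_def by blast+
  then show ?thesis
    by (rule that)
qed

lemma subring_eq_UNIV_if_inverse_mem:
  assumes Q: "is_subring Q" "v \<in> Q" and vu: "v * u = 1" and scaled: "\<And>x. \<exists>M. u ^ M * x \<in> Q"
  shows "Q = UNIV"
proof -
  have "x \<in> Q" for x
  proof -
    obtain M where "u ^ M * x \<in> Q"
      using scaled by blast
    then have "v ^ M * (u ^ M * x) \<in> Q"
      using Q is_subring_mult is_subring_power by blast
    then show "x \<in> Q"
      by (simp add: mult.assoc[symmetric] left_right_inverse_power[OF vu])
  qed
  then show ?thesis
    by blast
qed

theorem theorem3p1:
  fixes A :: "'a::ring_1 set"
  assumes "(1::'a) \<noteq> 0"
    and "\<forall>x::'a. integral_over center x"
    and "conch_maximal_subring_of_center A"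
    and "is_subring (integral_closure A)"
  shows "\<exists>R. maximal_subring UNIV R \<and> integral_closure A \<subseteq> R \<and> R \<inter> center = A"
proof -
  obtain u v where u: "u \<in> A" and v: "v \<in> center" "u * v = 1" "v * u = 1" "v \<notin> A"
    and maxA: "maximal_subring center A"
    using assms(3) unfolding conch_maximal_subring_of_center_def by blast
  note A = maximal_subringD(1,2)[OF maxA]
  have scaled: "\<exists>M. u ^ M * x \<in> integral_closure A" for x
    using integral_over_power_mult[OF A u absorbed_by_powers_eq_center[OF maxA u v(1,3,4)]] assms(2)
    unfolding integral_closure_def by blast
  have "v \<notin> integral_closure A"
    using integral_inverse_mem[OF A u v(2)] v(4) unfolding integral_closure_def by blast
  then obtain R where R: "is_subring R" "integral_closure A \<subseteq> R" "v \<notin> R"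
    and maxR: "\<And>Q. is_subring Q \<Longrightarrow> R \<subseteq> Q \<Longrightarrow> v \<notin> Q \<Longrightarrow> Q = R"
    using maximal_subring_avoiding[OF assms(4)] by blast
  have "A \<subseteq> R \<inter> center"
    using A(2) R(2) subset_integral_closure[OF A(1)] by blast
  then have "R \<inter> center = A \<or> R \<inter> center = center"
    using maximal_subringD(3)[OF maxA is_subring_Int[OF R(1) is_subring_center]] by blast
  then have "R \<inter> center = A"
    using R(3) v(1) by blast
  have "Q = UNIV" if "is_subring Q" "R \<subseteq> Q" "v \<in> Q" for Q
    using subring_eq_UNIV_if_inverse_mem[OF that(1,3) v(3)] scaled that(2) R(2) by blast
  then have "maximal_subring UNIV R"
    unfolding maximal_subring_def using R maxR by blast
  with R(2) \<open>R \<inter> center = A\<close> show ?thesis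
    by blast
qed

end
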